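(* Let $q\ge0$, let $s_0<s_1<\dots<s_q$ be distinct nodes in $[0,1]$ with $s_q=1$, and let $\{\lambda_n^{[q]}\}_{n=0}^q$ be the corresponding Lagrange basis of $\mathcal{P}^q([0,1])$. Define, for $m,n=0,\dots,q$, $$a_{mn}=\int_0^1\dot\lambda_n^{[q]}(t)\lambda_m^{[q]}(t)\,dt+\lambda_n^{[q]}(0)\lambda_m^{[q]}(0),$$ let $A=(a_{mn})_{m,n=0}^q$ (which is invertible) and $\bar A=(\bar a_{mn})=A^{-1}$. Then for every $m=0,\dots,q$, $$\sum_{n=0}^q\bar a_{mn}\lambda_n^{[q]}(0)=1.$$
   Context: $\mathcal{P}^q([0,1])$ is the space of polynomials of degree $\le q$ on $[0,1]$; the Lagrange basis for nodes $s_0,\dots,s_q$ is $\lambda_n(s)=\prod_{l\ne n}(s-s_l)/(s_n-s_l)$. *)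

theory Defs
  imports "HOL-Analysis.Analysis"
begin

definition lagrange_basis :: "(nat \<Rightarrow> real) \<Rightarrow> nat \<Rightarrow> nat \<Rightarrow> real \<Rightarrow> real" where
  "lagrange_basis s q n t = (\<Prod>l\<in>{0..q} - {n}. (t - s l) / (s n - s l))"

definition lagrange_matrix :: "(nat \<Rightarrow> real) \<Rightarrow> nat \<Rightarrow> nat \<Rightarrow> nat \<Rightarrow> real" where
  "lagrange_matrix s q m n =
     integral {0..1} (\<lambda>t. deriv (lagrange_basis s q n) t * lagrange_basis s q m t)
     + lagrange_basis s q n 0 * lagrange_basis s q m 0"

definition is_inverse_matrix :: "nat \<Rightarrow> (nat \<Rightarrow> nat \<Rightarrow> real) \<Rightarrow> (nat \<Rightarrow> nat \<Rightarrow> real) \<Rightarrow> bool" where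
  "is_inverse_matrix q A B \<longleftrightarrow>
     (\<forall>i\<le>q. \<forall>j\<le>q. (\<Sum>k\<le>q. A i k * B k j) = (if i = j then 1 else 0)) \<and>
     (\<forall>i\<le>q. \<forall>j\<le>q. (\<Sum>k\<le>q. B i k * A k j) = (if i = j then 1 else 0))"

end

theory Submission
  imports Defs "HOL-Computational_Algebra.Polynomial" "Jordan_Normal_Form.Determinant"
begin

text \<open>Writing \<open>a(u,w) = \<integral>\<^sub>0\<^sup>1 u' w + u(0) w(0)\<close>, we have \<open>a_mn = a(\<lambda>_n, \<lambda>_m)\<close>. The form is
  nondegenerate on polynomials of degree \<open>\<le> q\<close>: \<open>2 a(u,u) = u(1)\<^sup>2 + u(0)\<^sup>2\<close> forces \<open>u(0) = 0\<close>
  when \<open>a(u,\<cdot>)\<close> vanishes, and then \<open>a(u,u') = \<integral>\<^sub>0\<^sup>1 u'\<^sup>2 = 0\<close> makes \<open>u\<close> constant, hence zero;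
  so \<open>A\<close> is invertible. Since the Lagrange basis sums to \<open>1\<close>, the row sums of \<open>A\<close> are
  \<open>a(1,\<lambda>_m) = \<lambda>_m(0)\<close>, i.e. \<open>A \<one> = (\<lambda>_m(0))\<^sub>m\<close>, and therefore \<open>A\<^sup>-\<^sup>1 (\<lambda>_m(0))\<^sub>m = \<one>\<close>.\<close>

lemma is_inverse_matrix_exists:
  fixes A :: "nat \<Rightarrow> nat \<Rightarrow> real"
  assumes kernel: "\<And>c. \<forall>i\<le>q. (\<Sum>k\<le>q. A i k * c k) = 0 \<Longrightarrow> \<forall>k\<le>q. c k = 0"
  shows "\<exists>B. is_inverse_matrix q A B"
proof -
  define M where "M = mat (Suc q) (Suc q) (\<lambda>(i,j). A i j)"
  have M: "M \<in> carrier_mat (Suc q) (Suc q)" unfolding M_def by auto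
  have range: "{0..<Suc q} = {..q}" by auto
  have "Determinant.det M \<noteq> 0"
  proof
    assume "Determinant.det M = 0"
    then obtain v where v: "v \<in> carrier_vec (Suc q)" "v \<noteq> 0\<^sub>v (Suc q)" "M *\<^sub>v v = 0\<^sub>v (Suc q)"
      using det_0_iff_vec_prod_zero[OF M] by auto
    have "(\<Sum>k\<le>q. A i k * vec_index v k) = 0" if "i \<le> q" for i
    proof -
      have "(\<Sum>k\<le>q. A i k * vec_index v k) = vec_index (M *\<^sub>v v) i"
        using that v(1) unfolding M_def mult_mat_vec_def scalar_prod_def by (simp add: range row_def)
      also have "\<dots> = 0" using v(3) that by simp
      finally show ?thesis .
    qed
    then have "\<forall>k\<le>q. vec_index v k = 0" using kernel[of "\<lambda>k. vec_index v k"] by blast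
    then have "v = 0\<^sub>v (Suc q)" using v(1) by (intro eq_vecI) auto
    with v(2) show False by simp
  qed
  then obtain N where N: "N \<in> carrier_mat (Suc q) (Suc q)" "N * M = 1\<^sub>m (Suc q)" "M * N = 1\<^sub>m (Suc q)"
    using det_non_zero_imp_unit[OF M, of "()"] unfolding Units_def ring_mat_def by auto
  have "(M * N) $$ (i,j) = (\<Sum>k\<le>q. A i k * N $$ (k,j))"
       "(N * M) $$ (i,j) = (\<Sum>k\<le>q. N $$ (i,k) * A k j)" if "i \<le> q" "j \<le> q" for i j
    using that N(1) unfolding M_def by (simp_all add: scalar_prod_def range row_def col_def)
  with N(2,3) have "is_inverse_matrix q A (\<lambda>i j. N $$ (i,j))"
    unfolding is_inverse_matrix_def by simp
  then show ?thesis by blast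
qed

lemma is_inverse_matrix_mult_row_sums:
  assumes "is_inverse_matrix q A B" and "\<And>i. i \<le> q \<Longrightarrow> (\<Sum>k\<le>q. A i k) = r i" and "m \<le> q"
  shows "(\<Sum>n\<le>q. B m n * r n) = 1"
proof -
  have "(\<Sum>n\<le>q. B m n * r n) = (\<Sum>n\<le>q. \<Sum>k\<le>q. B m n * A n k)"
    using assms(2) by (intro sum.cong) (simp_all add: sum_distrib_left[symmetric])
  also have "\<dots> = (\<Sum>k\<le>q. \<Sum>n\<le>q. B m n * A n k)"
    by (rule sum.swap)
  also have "\<dots> = (\<Sum>k\<le>q. if m = k then 1 else 0)"
    using assms(1,3) unfolding is_inverse_matrix_def by (intro sum.cong) auto
  finally show ?thesis using assms(3) by simp
qed

definition lagrange_poly :: "(nat \<Rightarrow> real) \<Rightarrow> nat \<Rightarrow> nat \<Rightarrow> real poly" where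
  "lagrange_poly s q n = (\<Prod>l\<in>{0..q} - {n}. [:- s l / (s n - s l), 1 / (s n - s l):])"

lemma poly_lagrange_poly: "poly (lagrange_poly s q n) = lagrange_basis s q n"
  unfolding lagrange_basis_def lagrange_poly_def poly_prod
  by (intro ext prod.cong refl) (simp add: diff_divide_distrib)

lemma degree_lagrange_poly:
  assumes "n \<le> q"
  shows "degree (lagrange_poly s q n) \<le> q"
proof -
  have "degree (lagrange_poly s q n)
      \<le> (\<Sum>l\<in>{0..q} - {n}. degree [:- s l / (s n - s l), 1 / (s n - s l):])"
    unfolding lagrange_poly_def using degree_prod_sum_le[of "{0..q} - {n}"] unfolding o_def by blast
  also have "\<dots> \<le> (\<Sum>l\<in>{0..q} - {n}. 1)" by (intro sum_mono) auto
  also have "\<dots> = q" using assms by simp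
  finally show ?thesis .
qed

lemma lagrange_basis_node:
  assumes "inj_on s {0..q}" and "n \<le> q" and "k \<le> q"
  shows "lagrange_basis s q n (s k) = (if k = n then 1 else 0)"
proof (cases "k = n")
  case True
  have "s n \<noteq> s l" if "l \<in> {0..q} - {n}" for l
    using assms(1,2) that by (auto dest: inj_onD)
  then show ?thesis using True unfolding lagrange_basis_def by (simp add: prod.neutral)
next
  case False
  then show ?thesis using assms(3) unfolding lagrange_basis_def
    by (auto intro!: prod_zero bexI[of _ k])
qed

lemma poly_lagrange_combination_node:
  assumes "inj_on s {0..q}" and "k \<le> q"
  shows "poly (\<Sum>n\<le>q. Polynomial.smult (c n) (lagrange_poly s q n)) (s k) = c k"
proof -
  have "poly (\<Sum>n\<le>q. Polynomial.smult (c n) (lagrange_poly s q n)) (s k)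
      = (\<Sum>n\<le>q. if n = k then c n else 0)"
    unfolding poly_sum poly_smult poly_lagrange_poly
    using assms by (intro sum.cong) (auto simp: lagrange_basis_node)
  also have "\<dots> = c k" using assms(2) by simp
  finally show ?thesis .
qed

lemma lagrange_interpolation:
  assumes "inj_on s {0..q}" and "degree p \<le> q"
  shows "p = (\<Sum>n\<le>q. Polynomial.smult (poly p (s n)) (lagrange_poly s q n))"
proof (rule poly_eqI_degree)
  show "card (s ` {0..q}) > degree p" and
    "card (s ` {0..q}) > degree (\<Sum>n\<le>q. Polynomial.smult (poly p (s n)) (lagrange_poly s q n))"
    using assms by (auto simp: card_image intro!: le_imp_less_Suc degree_sum_le
        order.trans[OF degree_smult_le] degree_lagrange_poly)
qed (use assms in \<open>auto simp: poly_lagrange_combination_node[where c = "\<lambda>n. poly p (s n)"]\<close>)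

lemma sum_lagrange_poly:
  assumes "inj_on s {0..q}"
  shows "(\<Sum>n\<le>q. lagrange_poly s q n) = 1"
  using lagrange_interpolation[OF assms, of 1] by simp

definition upwind_form :: "real poly \<Rightarrow> real poly \<Rightarrow> real" where
  "upwind_form u w = integral {0..1} (poly (pderiv u * w)) + poly u 0 * poly w 0"

lemma integral_poly_lincomb:
  fixes f :: "'i \<Rightarrow> real poly"
  assumes "finite S"
  shows "integral {a..b} (poly (\<Sum>n\<in>S. Polynomial.smult (c n) (f n)))
       = (\<Sum>n\<in>S. c n * integral {a..b} (poly (f n)))"
proof -
  have "integral {a..b} (poly (\<Sum>n\<in>S. Polynomial.smult (c n) (f n)))
      = integral {a..b} (\<lambda>t. \<Sum>n\<in>S. c n * poly (f n) t)"
    unfolding poly_sum poly_smult by (simp add: fun_eq_iff)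
  also have "\<dots> = (\<Sum>n\<in>S. integral {a..b} (\<lambda>t. c n * poly (f n) t))"
    using assms by (intro integral_sum)
      (auto intro!: integrable_continuous_real continuous_on_mult_left continuous_on_poly continuous_on_id)
  finally show ?thesis by simp
qed

lemma pderiv_sum: "pderiv (sum f A) = (\<Sum>x\<in>A. pderiv (f x))"
  using higher_pderiv_sum[of 1] by simp

lemma upwind_form_lincomb_left:
  assumes "finite S"
  shows "upwind_form (\<Sum>n\<in>S. Polynomial.smult (c n) (f n)) w = (\<Sum>n\<in>S. c n * upwind_form (f n) w)"
proof -
  have "pderiv (\<Sum>n\<in>S. Polynomial.smult (c n) (f n)) * w
      = (\<Sum>n\<in>S. Polynomial.smult (c n) (pderiv (f n) * w))"
    by (simp add: pderiv_sum pderiv_smult sum_distrib_right)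
  with assms show ?thesis unfolding upwind_form_def
    by (simp add: integral_poly_lincomb poly_sum sum_distrib_right sum.distrib distrib_left mult.assoc)
qed

lemma upwind_form_lincomb_right:
  assumes "finite S"
  shows "upwind_form u (\<Sum>n\<in>S. Polynomial.smult (c n) (f n)) = (\<Sum>n\<in>S. c n * upwind_form u (f n))"
proof -
  have "pderiv u * (\<Sum>n\<in>S. Polynomial.smult (c n) (f n))
      = (\<Sum>n\<in>S. Polynomial.smult (c n) (pderiv u * f n))"
    by (simp add: sum_distrib_left)
  with assms show ?thesis unfolding upwind_form_def
    by (simp add: integral_poly_lincomb poly_sum sum_distrib_left sum.distrib distrib_left mult_ac)
qed

lemma upwind_form_one_left: "upwind_form 1 w = poly w 0"
proof -
  have "poly (pderiv 1 * w) = (\<lambda>_. 0)" by (simp add: fun_eq_iff)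
  then show ?thesis by (simp add: upwind_form_def)
qed

lemma integral_poly_pderiv:
  fixes p :: "real poly"
  assumes "a \<le> b"
  shows "integral {a..b} (poly (pderiv p)) = poly p b - poly p a"
proof (rule integral_unique)
  show "(poly (pderiv p) has_integral poly p b - poly p a) {a..b}"
    using assms
    by (intro fundamental_theorem_of_calculus[of a b "poly p"])
       (auto simp: has_real_derivative_iff_has_vector_derivative[symmetric]
         intro: DERIV_subset[OF poly_DERIV])
qed

lemma upwind_form_diag: "2 * upwind_form u u = poly u 1 ^ 2 + poly u 0 ^ 2"
proof -
  have "poly (pderiv (u * u)) = (\<lambda>t. 2 * poly (pderiv u * u) t)"
    by (simp add: pderiv_mult fun_eq_iff)
  then have "2 * integral {0..1} (poly (pderiv u * u)) = integral {0..1} (poly (pderiv (u * u)))"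
    by (simp only: integral_mult_right)
  also have "\<dots> = poly u 1 ^ 2 - poly u 0 ^ 2"
    by (simp add: integral_poly_pderiv power2_eq_square)
  finally show ?thesis unfolding upwind_form_def by (simp add: power2_eq_square)
qed

lemma poly_eq_0_if_integral_square_eq_0:
  fixes p :: "real poly" and a b :: real
  assumes "a < b" and "integral {a..b} (poly (p * p)) = 0"
  shows "p = 0"
proof (rule ccontr)
  assume "p \<noteq> 0"
  have continuous: "continuous_on {a..b} (poly (p * p))"
    by (rule continuous_on_poly[OF continuous_on_id])
  have "(poly (p * p) has_integral 0) (cbox a b)"
    using assms(2) integrable_integral[OF integrable_continuous_real[OF continuous]] by simp
  then have "poly (p * p) x = 0" if "x \<in> {a..b}" for x
    using has_integral_0_cbox_imp_0[of a b "poly (p * p)" x] assms(1) that continuous by simp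
  then have "{a..b} \<subseteq> {x. poly p x = 0}" by auto
  with poly_roots_finite[OF \<open>p \<noteq> 0\<close>] have "finite {a..b}" by (rule finite_subset[rotated])
  with assms(1) show False using infinite_Icc by blast
qed

lemma upwind_form_nondegenerate:
  assumes vanish: "\<And>w. degree w \<le> q \<Longrightarrow> upwind_form u w = 0" and "degree u \<le> q"
  shows "u = 0"
proof -
  have "poly u 1 ^ 2 + poly u 0 ^ 2 = 0"
    using upwind_form_diag[of u] vanish[OF \<open>degree u \<le> q\<close>] by simp
  then have u0: "poly u 0 = 0" by simp
  have "degree (pderiv u) \<le> q" using \<open>degree u \<le> q\<close> by (simp add: degree_pderiv)
  with u0 have "integral {0..1} (poly (pderiv u * pderiv u)) = 0"
    using vanish[of "pderiv u"] unfolding upwind_form_def by simp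
  then have "pderiv u = 0" by (intro poly_eq_0_if_integral_square_eq_0[of 0 1]) auto
  then obtain c where "u = [:c:]" using pderiv_iszero by blast
  with u0 show "u = 0" by simp
qed

lemma lagrange_matrix_eq_upwind_form:
  "lagrange_matrix s q m n = upwind_form (lagrange_poly s q n) (lagrange_poly s q m)"
proof -
  have "deriv (poly p) = poly (pderiv p)" for p :: "real poly"
    by (intro ext DERIV_imp_deriv poly_DERIV)
  then show ?thesis
    unfolding lagrange_matrix_def upwind_form_def poly_lagrange_poly[symmetric]
    by (simp add: poly_mult[abs_def])
qed

lemma lagrange_matrix_kernel_trivial:
  assumes inj: "inj_on s {0..q}"
    and kernel: "\<forall>i\<le>q. (\<Sum>k\<le>q. lagrange_matrix s q i k * c k) = 0"
  shows "\<forall>k\<le>q. c k = 0"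
proof -
  define u where "u = (\<Sum>k\<le>q. Polynomial.smult (c k) (lagrange_poly s q k))"
  have "degree u \<le> q"
    unfolding u_def
    by (intro degree_sum_le) (auto intro: order.trans[OF degree_smult_le] degree_lagrange_poly)
  have basis: "upwind_form u (lagrange_poly s q i) = 0" if "i \<le> q" for i
    using kernel that unfolding u_def
    by (simp add: upwind_form_lincomb_left lagrange_matrix_eq_upwind_form mult.commute)
  have "upwind_form u w = 0" if "degree w \<le> q" for w
    by (subst lagrange_interpolation[OF inj that]) (simp add: upwind_form_lincomb_right basis)
  then have "u = 0" using \<open>degree u \<le> q\<close> by (rule upwind_form_nondegenerate)
  then show ?thesis
    using poly_lagrange_combination_node[OF inj, of _ c] unfolding u_def by simp
qed

lemma lagrange_matrix_row_sum:
  assumes "inj_on s {0..q}"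
  shows "(\<Sum>k\<le>q. lagrange_matrix s q n k) = lagrange_basis s q n 0"
proof -
  have "(\<Sum>k\<le>q. lagrange_matrix s q n k)
      = upwind_form (\<Sum>k\<le>q. Polynomial.smult 1 (lagrange_poly s q k)) (lagrange_poly s q n)"
    by (simp only: upwind_form_lincomb_left finite_atMost lagrange_matrix_eq_upwind_form mult_1)
  also have "\<dots> = lagrange_basis s q n 0"
    using sum_lagrange_poly[OF assms] by (simp add: upwind_form_one_left poly_lagrange_poly)
  finally show ?thesis .
qed

theorem lemmaA2:
  fixes q :: nat and s :: "nat \<Rightarrow> real"
  assumes incr: "\<And>i j. i < j \<Longrightarrow> j \<le> q \<Longrightarrow> s i < s j"
    and nonneg: "0 \<le> s 0"
    and last: "s q = 1"
  shows "(\<exists>B. is_inverse_matrix q (lagrange_matrix s q) B) \<and>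
         (\<forall>B. is_inverse_matrix q (lagrange_matrix s q) B \<longrightarrow>
            (\<forall>m\<le>q. (\<Sum>n\<le>q. B m n * lagrange_basis s q n 0) = 1))"
proof -
  have "strict_mono_on {0..q} s" using incr by (auto intro: strict_mono_onI)
  then have inj: "inj_on s {0..q}" by (rule strict_mono_on_imp_inj_on)
  have "\<exists>B. is_inverse_matrix q (lagrange_matrix s q) B"
    using lagrange_matrix_kernel_trivial[OF inj] by (rule is_inverse_matrix_exists)
  moreover have "(\<Sum>n\<le>q. B m n * lagrange_basis s q n 0) = 1"
    if "is_inverse_matrix q (lagrange_matrix s q) B" and "m \<le> q" for B m
    using that(1) lagrange_matrix_row_sum[OF inj] that(2) by (rule is_inverse_matrix_mult_row_sums)
  ultimately show ?thesis by blast
qed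

end
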